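(* Let $\mathcal{Z}$ be a finite pretraining dataset with $|\mathcal{Z}|=m$ and $\mathcal{X}$ a finite finetuning dataset with $|\mathcal{X}|=n$. Let $g(z,W,U)$ be a pretraining loss and $f(x,W,\Theta)$ a finetuning loss, where $W\in\mathbb{R}^{p}$ are shared (embedding) parameters, $U\in\mathbb{R}^{q}$ are pretraining-specific parameters and $\Theta\in\mathbb{R}^{s}$ are finetuning-specific parameters. Define $$G(W,U)=\frac{1}{m}\sum_{z\in\mathcal{Z}}g(z,W,U),\qquad F(W,\Theta)=\frac{1}{n}\sum_{x\in\mathcal{X}}f(x,W,\Theta),$$ $$(W^*,U^* )=\arg\min_{W,U}G(W,U),\qquad \Theta^*=\arg\min_{\Theta}F(W^*,\Theta).$$ For a pretraining example $z$ and a scalar $\epsilon$, define the perturbed solutions $$(\hat W_\epsilon,\hat U_\epsilon)=\arg\min_{W,U}\big\{G(W,U)+\epsilon\, g(z,W,U)\big\},\qquad \hat\Theta_\epsilon=\arg\min_{\Theta}F(\hat W_\epsilon,\Theta),$$ so that $\hat W_0=W^*$, $\hat U_0=U^*$, $\hat\Theta_0=\Theta^*$ (i.e. $W$ is kept fixed during finetuning). Then $$I_{z,W}:=\frac{\partial \hat W_\epsilon}{\partial\epsilon}\Big|_{\epsilon=0}=-\left[\Big(\frac{\partial^2 G(W^*,U^* )}{\partial (W,U)^2}\Big)^{-1}\frac{\partial g(z,W^*,U^* )}{\partial (W,U)}\right]_W$$ and $$I_{z,\Theta}:=\frac{\partial \hat \Theta_\epsilon}{\partial\epsilon}\Big|_{\epsilon=0}=\Big(\frac{\partial^2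 F(W^*,\Theta^* )}{\partial \Theta^2}\Big)^{-1}\frac{\partial^2 F(W^*,\Theta^* )}{\partial \Theta\,\partial W}\left[\Big(\frac{\partial^2 G(W^*,U^* )}{\partial (W,U)^2}\Big)^{-1}\frac{\partial g(z,W^*,U^* )}{\partial (W,U)}\right]_W .$$
   Context: $\frac{\partial}{\partial(W,U)}$ denotes the gradient with respect to the concatenated parameter vector $[W,U]\in\mathbb{R}^{p+q}$, and $\frac{\partial^2 G}{\partial (W,U)^2}$ the corresponding $(p+q)\times(p+q)$ Hessian. $\frac{\partial^2 F}{\partial\Theta^2}$ is the $s\times s$ Hessian of $F$ in $\Theta$, and $\frac{\partial^2 F}{\partial\Theta\,\partial W}$ is the $s\times p$ matrix of mixed second partial derivatives (the Jacobian with respect to $W$ of $\nabla_\Theta F$). For a vector $v\in\mathbb{R}^{p+q}$, $[v]_W\in\mathbb{R}^p$ denotes its $W$-part (first $p$ coordinates). It is assumed that $g$ and $f$ are twice continuously differentiable, the minimizers above are well defined and depend differentiably on $\epsilon$ near $0$, and the Hessians $\frac{\partial^2 G(W^*,U^* )}{\partial (W,U)^2}$ and $\frac{\partial^2 F(W^*,\Theta^* )}{\partial\Theta^2}$ are invertible. *)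

theory Defs
  imports "HOL-Analysis.Analysis"
begin

definition grad :: "(real^'n \<Rightarrow> real) \<Rightarrow> real^'n \<Rightarrow> real^'n" where
  "grad h x = (\<chi> i. frechet_derivative h (at x) (axis i 1))"

definition hess :: "(real^'n \<Rightarrow> real) \<Rightarrow> real^'n \<Rightarrow> real^'n^'n" where
  "hess h x = jacobian (grad h) (at x)"

definition C2 :: "(real^'n \<Rightarrow> real) \<Rightarrow> bool" where
  "C2 h \<longleftrightarrow> (\<forall>x. h differentiable (at x)) \<and> (\<forall>x. grad h differentiable (at x))
     \<and> continuous_on UNIV (hess h)"

text \<open>Concatenation of parameter vectors [A,B] in R^(a+b), indexed by the sum type,
  and the projection to the first block ([v]_W).\<close>
definition concat :: "real^('a::finite) \<Rightarrow> real^('b::finite) \<Rightarrow> real^('a + 'b)" where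
  "concat A B = (\<chi> i. case i of Inl a \<Rightarrow> A $ a | Inr b \<Rightarrow> B $ b)"

definition fstpart :: "real^('a::finite + 'b::finite) \<Rightarrow> real^'a" where
  "fstpart v = (\<chi> a. v $ Inl a)"

definition sndpart :: "real^('a::finite + 'b::finite) \<Rightarrow> real^'b" where
  "sndpart v = (\<chi> b. v $ Inr b)"

definition argmin_set :: "('a \<Rightarrow> real) \<Rightarrow> 'a set" where
  "argmin_set \<phi> = {x. \<forall>y. \<phi> x \<le> \<phi> y}"

definition avg_loss :: "'d set \<Rightarrow> ('d \<Rightarrow> 'a \<Rightarrow> 'b \<Rightarrow> real) \<Rightarrow> 'a \<Rightarrow> 'b \<Rightarrow> real" where
  "avg_loss D l A B = (1 / real (card D)) * (\<Sum>d\<in>D. l d A B)"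

end

theory Submission
  imports Defs
begin

(* Both formulas come from implicit differentiation of first-order optimality conditions.
   The perturbed pretraining minimiser V e = [W_e, U_e] satisfies
   grad G (V e) + e * grad g_z (V e) = 0 for small e; differentiating at e = 0 gives
   H_G V' + grad g_z = 0, so V' = - H_G^-1 grad g_z and W' is its W-block.
   The finetuning minimiser satisfies grad_Theta F (W_e, Theta_e) = 0; differentiating gives
   (d^2F/dTheta dW) W' + H_F Theta' = 0, and substituting W' yields the second formula. *)

lemma fstpart_concat [simp]: "fstpart (concat a b) = a"
  by (simp add: fstpart_def concat_def vec_eq_iff)

lemma sndpart_concat [simp]: "sndpart (concat a b) = b"
  by (simp add: sndpart_def concat_def vec_eq_iff)

lemma concat_fstpart_sndpart [simp]: "concat (fstpart v) (sndpart v) = v"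
  by (simp add: fstpart_def sndpart_def concat_def vec_eq_iff split: sum.split)

lemma concat_add: "concat (a + b) (c + d) = concat a c + concat b d"
  by (simp add: concat_def vec_eq_iff split: sum.split)

lemma concat_scaleR: "concat (r *\<^sub>R a) (r *\<^sub>R b) = r *\<^sub>R concat a b"
  by (simp add: concat_def vec_eq_iff split: sum.split)

lemma concat_0_axis: "concat 0 (axis i 1) = axis (Inr i) (1::real)"
  by (simp add: concat_def vec_eq_iff axis_def split: sum.split)

lemma fstpart_uminus: "fstpart (- v) = - fstpart v"
  by (simp add: fstpart_def vec_eq_iff)

lemma bounded_linear_concat:
  "bounded_linear (\<lambda>p::(real^'a::finite) \<times> (real^'b::finite). concat (fst p) (snd p))"
  unfolding linear_conv_bounded_linear[symmetric]
  by (rule linearI) (simp_all add: concat_def vec_eq_iff split: sum.split)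

lemma bounded_linear_sndpart: "bounded_linear (sndpart :: real^('a::finite + 'b::finite) \<Rightarrow> real^'b)"
  unfolding linear_conv_bounded_linear[symmetric]
  by (rule linearI) (simp_all add: sndpart_def vec_eq_iff)

lemma has_derivative_concat:
  assumes "(A has_derivative A') (at x within S)" "(B has_derivative B') (at x within S)"
  shows "((\<lambda>x. concat (A x) (B x)) has_derivative (\<lambda>h. concat (A' h) (B' h))) (at x within S)"
  using bounded_linear.has_derivative[OF bounded_linear_concat has_derivative_Pair[OF assms]]
  by simp

lemma has_vector_derivative_concat:
  assumes "(A has_vector_derivative A') (at x within S)" "(B has_vector_derivative B') (at x within S)"
  shows "((\<lambda>t. concat (A t) (B t)) has_vector_derivative concat A' B') (at x within S)"
  using has_derivative_concat[OF assms[unfolded has_vector_derivative_def]]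
  by (simp add: has_vector_derivative_def concat_scaleR)

lemma has_derivative_concat_left: "((\<lambda>a. concat a b) has_derivative (\<lambda>h. concat h 0)) (at x within S)"
  by (intro has_derivative_concat has_derivative_ident has_derivative_const)

lemma has_derivative_concat_right: "((\<lambda>b. concat a b) has_derivative (\<lambda>h. concat 0 h)) (at x within S)"
  by (intro has_derivative_concat has_derivative_ident has_derivative_const)

lemma differentiable_concat_right:
  "h differentiable (at (concat a b)) \<Longrightarrow> (\<lambda>b. h (concat a b)) differentiable (at b)"
  using differentiable_compose differentiableI[OF has_derivative_concat_right] by blast

lemma matrix_inv_mult_left: "invertible (A::'a::comm_semiring_1^'n^'n) \<Longrightarrow> matrix_inv A ** A = mat 1"
  unfolding invertible_def matrix_inv_def by (rule someI2_ex) auto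

lemma eq_matrix_inv_mult: "invertible (A::'a::comm_semiring_1^'n^'n) \<Longrightarrow> A *v x = y \<Longrightarrow> x = matrix_inv A *v y"
  by (metis matrix_inv_mult_left matrix_vector_mul_assoc matrix_vector_mul_lid)

lemma matrix_vector_mult_uminus: "(A::'a::ring_1^'n^'m) *v (- x) = - (A *v x)"
  by (simp add: matrix_vector_mult_def vec_eq_iff sum_negf)

lemma jacobian_mult_eq:
  fixes f :: "real^'n \<Rightarrow> real^'m"
  assumes "(f has_derivative D) (at x)"
  shows "jacobian f (at x) *v y = D y"
proof -
  have "(f has_derivative (\<lambda>h. jacobian f (at x) *v h)) (at x)"
    using assms jacobian_works differentiableI by blast
  from has_derivative_unique[OF this assms] show ?thesis by metis
qed

lemma has_vector_derivative_jacobian_chain: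
  fixes \<Phi> :: "real^'n \<Rightarrow> real^'m"
  assumes "(V has_vector_derivative V') (at t)" "\<Phi> differentiable (at (V t))"
  shows "((\<lambda>e. \<Phi> (V e)) has_vector_derivative jacobian \<Phi> (at (V t)) *v V') (at t)"
  using has_derivative_compose[OF assms(1)[unfolded has_vector_derivative_def]
      assms(2)[unfolded jacobian_works]]
  by (simp add: has_vector_derivative_def matrix_vector_mult_scaleR)

lemma jacobian_concat_left:
  fixes \<Phi> :: "real^('a::finite + 'b::finite) \<Rightarrow> real^'m"
  assumes "\<Phi> differentiable (at (concat a b))"
  shows "jacobian (\<lambda>a. \<Phi> (concat a b)) (at a) *v h = jacobian \<Phi> (at (concat a b)) *v concat h 0"
  using has_derivative_compose[OF has_derivative_concat_left assms[unfolded jacobian_works]]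
  by (rule jacobian_mult_eq)

lemma jacobian_concat_right:
  fixes \<Phi> :: "real^('a::finite + 'b::finite) \<Rightarrow> real^'m"
  assumes "\<Phi> differentiable (at (concat a b))"
  shows "jacobian (\<lambda>b. \<Phi> (concat a b)) (at b) *v h = jacobian \<Phi> (at (concat a b)) *v concat 0 h"
  using has_derivative_compose[OF has_derivative_concat_right assms[unfolded jacobian_works]]
  by (rule jacobian_mult_eq)

lemma has_vector_derivative_eq_0_if_locally_0:
  assumes "(E has_vector_derivative E') (at t)" "\<delta> > 0" "\<And>e. dist e t < \<delta> \<Longrightarrow> E e = 0"
  shows "E' = 0"
proof -
  have "((\<lambda>_. 0) has_vector_derivative E') (at t)"
    by (rule has_vector_derivative_transform_within_open[OF assms(1), of "ball t \<delta>"])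
       (use assms in \<open>auto simp: dist_commute\<close>)
  then show ?thesis
    using vector_derivative_unique_at has_vector_derivative_const by blast
qed

lemma grad_eq_of_has_derivative: "(h has_derivative D) (at x) \<Longrightarrow> grad h x = (\<chi> i. D (axis i 1))"
  unfolding grad_def using frechet_derivative_at by metis

lemma grad_add:
  assumes "h differentiable (at x)" "k differentiable (at x)"
  shows "grad (\<lambda>v. h v + k v) x = grad h x + grad k x"
  using grad_eq_of_has_derivative[OF has_derivative_add[OF assms[unfolded frechet_derivative_works]]]
  by (simp add: grad_def vec_eq_iff)

lemma grad_cmult:
  assumes "h differentiable (at x)"
  shows "grad (\<lambda>v. c * h v) x = c *\<^sub>R grad h x"
  using grad_eq_of_has_derivative[OF has_derivative_mult_right[OF assms[unfolded frechet_derivative_works]]]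
  by (simp add: grad_def vec_eq_iff)

lemma grad_sum:
  assumes "\<And>d. d \<in> D \<Longrightarrow> h d differentiable (at x)"
  shows "grad (\<lambda>v. \<Sum>d\<in>D. h d v) x = (\<Sum>d\<in>D. grad (h d) x)"
  using grad_eq_of_has_derivative[OF has_derivative_sum[OF assms[unfolded frechet_derivative_works]]]
  by (simp add: grad_def vec_eq_iff sum_component)

lemma grad_concat_right:
  assumes "h differentiable (at (concat a b))"
  shows "grad (\<lambda>b. h (concat a b)) b = sndpart (grad h (concat a b))"
  using grad_eq_of_has_derivative[OF has_derivative_compose[OF has_derivative_concat_right
        assms[unfolded frechet_derivative_works]]]
  by (simp add: grad_def sndpart_def concat_0_axis)

lemma grad_eq_0_if_argmin:
  assumes "h differentiable (at x)" "x \<in> argmin_set h"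
  shows "grad h x = 0"
proof -
  have "frechet_derivative h (at x) = (\<lambda>v. 0)"
    using differential_zero_maxmin[of x UNIV h] assms
    by (auto simp: argmin_set_def frechet_derivative_works)
  then show ?thesis by (simp add: grad_def vec_eq_iff)
qed

lemma concat_mem_argmin_set:
  "(a, b) \<in> argmin_set (\<lambda>(A, B). \<phi> (concat A B)) \<Longrightarrow> concat a b \<in> argmin_set \<phi>"
proof (unfold argmin_set_def, intro CollectI allI)
  fix v
  assume "(a, b) \<in> {x. \<forall>y. (\<lambda>(A, B). \<phi> (concat A B)) x \<le> (\<lambda>(A, B). \<phi> (concat A B)) y}"
  then have "(\<lambda>(A, B). \<phi> (concat A B)) (a, b) \<le> (\<lambda>(A, B). \<phi> (concat A B)) (fstpart v, sndpart v)"
    by blast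
  then show "\<phi> (concat a b) \<le> \<phi> v" by simp
qed

lemma
  assumes "finite D" "\<And>d. C2 (\<lambda>v. l d (fstpart v) (sndpart v))"
  shows differentiable_avg_loss: "(\<lambda>v. avg_loss D l (fstpart v) (sndpart v)) differentiable (at x)"
    and differentiable_grad_avg_loss: "grad (\<lambda>v. avg_loss D l (fstpart v) (sndpart v)) differentiable (at x)"
proof -
  define h where "h d v = l d (fstpart v) (sndpart v)" for d v
  have h: "\<And>d x. h d differentiable (at x)" "\<And>d x. grad (h d) differentiable (at x)"
    using assms(2) unfolding C2_def h_def by blast+
  have avg: "(\<lambda>v. avg_loss D l (fstpart v) (sndpart v)) = (\<lambda>v. 1 / real (card D) * (\<Sum>d\<in>D. h d v))"
    by (simp add: avg_loss_def h_def)
  show "(\<lambda>v. avg_loss D l (fstpart v) (sndpart v)) differentiable (at x)"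
    unfolding avg using assms(1) h by (intro differentiable_mult differentiable_sum) auto
  have grad_avg: "grad (\<lambda>v. c * (\<Sum>d\<in>D. h d v)) = (\<lambda>x. c *\<^sub>R (\<Sum>d\<in>D. grad (h d) x))" for c
    using assms(1) h by (intro ext) (simp add: grad_cmult grad_sum differentiable_sum)
  then show "grad (\<lambda>v. avg_loss D l (fstpart v) (sndpart v)) differentiable (at x)"
    unfolding avg grad_avg using assms(1) h by (auto intro: differentiable_sum)
qed

lemma implicit_derivative_of_perturbed_zero:
  fixes \<Phi> k :: "real^'n \<Rightarrow> real^'n"
  assumes V: "(V has_vector_derivative V') (at 0)"
    and \<Phi>: "\<Phi> differentiable (at (V 0))" and k: "k differentiable (at (V 0))"
    and "\<delta> > 0" and "\<And>e. \<bar>e\<bar> < \<delta> \<Longrightarrow> \<Phi> (V e) + e *\<^sub>R k (V e) = 0"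
    and inv: "invertible (jacobian \<Phi> (at (V 0)))"
  shows "V' = - (matrix_inv (jacobian \<Phi> (at (V 0))) *v k (V 0))"
proof -
  let ?H = "jacobian \<Phi> (at (V 0))"
  have "((\<lambda>e. \<Phi> (V e) + e *\<^sub>R k (V e)) has_vector_derivative ?H *v V' + k (V 0)) (at 0)"
    using has_vector_derivative_add[OF has_vector_derivative_jacobian_chain[OF V \<Phi>]
        has_vector_derivative_scaleR[OF DERIV_ident has_vector_derivative_jacobian_chain[OF V k]]]
    by simp
  then have "?H *v V' + k (V 0) = 0"
    by (rule has_vector_derivative_eq_0_if_locally_0) (use assms in \<open>auto simp: dist_real_def\<close>)
  then have "?H *v V' = - k (V 0)"
    by (simp add: eq_neg_iff_add_eq_0)
  then show ?thesis
    using eq_matrix_inv_mult[OF inv] matrix_vector_mult_uminus by metis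
qed

lemma implicit_derivative_of_zero_pair:
  fixes \<Phi> :: "real^('a::finite + 'b::finite) \<Rightarrow> real^'m"
  assumes A: "(A has_vector_derivative A') (at 0)" and B: "(B has_vector_derivative B') (at 0)"
    and \<Phi>: "\<Phi> differentiable (at (concat (A 0) (B 0)))"
    and "\<delta> > 0" and "\<And>e. \<bar>e\<bar> < \<delta> \<Longrightarrow> \<Phi> (concat (A e) (B e)) = 0"
  shows "jacobian (\<lambda>a. \<Phi> (concat a (B 0))) (at (A 0)) *v A'
       + jacobian (\<lambda>b. \<Phi> (concat (A 0) b)) (at (B 0)) *v B' = 0"
proof -
  let ?J = "jacobian \<Phi> (at (concat (A 0) (B 0)))"
  have "((\<lambda>e. \<Phi> (concat (A e) (B e))) has_vector_derivative ?J *v concat A' B') (at 0)"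
    using has_vector_derivative_jacobian_chain[OF has_vector_derivative_concat[OF A B] \<Phi>] .
  then have "?J *v concat A' B' = 0"
    by (rule has_vector_derivative_eq_0_if_locally_0) (use assms in \<open>auto simp: dist_real_def\<close>)
  moreover have "concat A' B' = concat A' 0 + concat 0 B'"
    using concat_add[of A' 0 0 B'] by simp
  ultimately show ?thesis
    by (simp add: jacobian_concat_left[OF \<Phi>] jacobian_concat_right[OF \<Phi>] matrix_vector_right_distrib)
qed

lemma perturbed_argmin_derivative:
  fixes G k :: "real^'n \<Rightarrow> real"
  assumes G: "\<And>v. G differentiable (at v)" "\<And>v. grad G differentiable (at v)"
    and k: "\<And>v. k differentiable (at v)" "\<And>v. grad k differentiable (at v)"
    and V: "(V has_vector_derivative V') (at 0)"
    and "\<delta> > 0" and argmin: "\<And>e. \<bar>e\<bar> < \<delta> \<Longrightarrow> V e \<in> argmin_set (\<lambda>v. G v + e * k v)"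
    and inv: "invertible (hess G (V 0))"
  shows "V' = - (matrix_inv (hess G (V 0)) *v grad k (V 0))"
proof -
  have "grad G (V e) + e *\<^sub>R grad k (V e) = 0" if "\<bar>e\<bar> < \<delta>" for e
  proof -
    have "grad (\<lambda>v. G v + e * k v) (V e) = 0"
      using G k argmin[OF that] by (intro grad_eq_0_if_argmin differentiable_add differentiable_mult) auto
    then show ?thesis
      using G k by (simp add: grad_add grad_cmult)
  qed
  from implicit_derivative_of_perturbed_zero[OF V G(2) k(2) \<open>\<delta> > 0\<close> this] inv
  show ?thesis by (simp add: hess_def)
qed

lemma partial_argmin_derivative:
  fixes F :: "real^('a::finite + 'b::finite) \<Rightarrow> real"
  assumes F: "\<And>v. F differentiable (at v)" "\<And>v. grad F differentiable (at v)"
    and A: "(A has_vector_derivative A') (at 0)" and B: "(B has_vector_derivative B') (at 0)"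
    and "\<delta> > 0" and argmin: "\<And>e. \<bar>e\<bar> < \<delta> \<Longrightarrow> B e \<in> argmin_set (\<lambda>b. F (concat (A e) b))"
    and inv: "invertible (hess (\<lambda>b. F (concat (A 0) b)) (B 0))"
  shows "B' = - (matrix_inv (hess (\<lambda>b. F (concat (A 0) b)) (B 0))
                  *v (jacobian (\<lambda>a. grad (\<lambda>b. F (concat a b)) (B 0)) (at (A 0)) *v A'))"
proof -
  define \<Phi> where "\<Phi> v = sndpart (grad F v)" for v
  have \<Phi>: "\<Phi> differentiable (at v)" for v
    unfolding \<Phi>_def using bounded_linear.has_derivative[OF bounded_linear_sndpart
        F(2)[unfolded frechet_derivative_works]] by (rule differentiableI)
  have grad_section: "grad (\<lambda>b. F (concat a b)) = (\<lambda>b. \<Phi> (concat a b))" for a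
    using grad_concat_right[OF F(1)] by (auto simp: \<Phi>_def)
  have "\<Phi> (concat (A e) (B e)) = 0" if "\<bar>e\<bar> < \<delta>" for e
    using grad_eq_0_if_argmin[OF differentiable_concat_right[OF F(1)] argmin[OF that]]
    by (simp add: grad_section)
  from implicit_derivative_of_zero_pair[OF A B \<Phi> \<open>\<delta> > 0\<close> this]
  have "hess (\<lambda>b. F (concat (A 0) b)) (B 0) *v B'
      = - (jacobian (\<lambda>a. grad (\<lambda>b. F (concat a b)) (B 0)) (at (A 0)) *v A')"
    by (simp add: hess_def grad_section eq_neg_iff_add_eq_0 add.commute)
  from eq_matrix_inv_mult[OF inv this] show ?thesis
    by (simp add: matrix_vector_mult_uminus)
qed

theorem theorem1:
  fixes Z :: "'z set" and X :: "'x set"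
    and g :: "'z \<Rightarrow> real^'p \<Rightarrow> real^'q \<Rightarrow> real"
    and f :: "'x \<Rightarrow> real^'p \<Rightarrow> real^'s \<Rightarrow> real"
    and z :: 'z
    and Wst :: "real^'p" and Ust :: "real^'q" and Tst :: "real^'s"
    and What :: "real \<Rightarrow> real^'p" and Uhat :: "real \<Rightarrow> real^'q"
    and That :: "real \<Rightarrow> real^'s"
    and \<delta> :: real
  assumes finZ: "finite Z" "Z \<noteq> {}" and finX: "finite X" "X \<noteq> {}"
    and zZ: "z \<in> Z"
    and g_C2: "\<And>z'. C2 (\<lambda>v. g z' (fstpart v) (sndpart v))"
    and f_C2: "\<And>x. C2 (\<lambda>v. f x (fstpart v) (sndpart v))"
    and opt_WU: "argmin_set (\<lambda>(W, U). avg_loss Z g W U) = {(Wst, Ust)}"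
    and opt_T: "argmin_set (\<lambda>T. avg_loss X f Wst T) = {Tst}"
    and \<delta>_pos: "\<delta> > 0"
    and pert_WU: "\<And>\<epsilon>. \<bar>\<epsilon>\<bar> < \<delta> \<Longrightarrow>
        argmin_set (\<lambda>(W, U). avg_loss Z g W U + \<epsilon> * g z W U) = {(What \<epsilon>, Uhat \<epsilon>)}"
    and pert_T: "\<And>\<epsilon>. \<bar>\<epsilon>\<bar> < \<delta> \<Longrightarrow>
        argmin_set (\<lambda>T. avg_loss X f (What \<epsilon>) T) = {That \<epsilon>}"
    and diff: "What differentiable (at 0)" "Uhat differentiable (at 0)"
      "That differentiable (at 0)"
    and invG: "invertible (hess (\<lambda>v. avg_loss Z g (fstpart v) (sndpart v)) (concat Wst Ust))"
    and invF: "invertible (hess (\<lambda>T. avg_loss X f Wst T) Tst)"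
  shows "vector_derivative What (at 0) =
           - fstpart (matrix_inv (hess (\<lambda>v. avg_loss Z g (fstpart v) (sndpart v)) (concat Wst Ust))
                        *v grad (\<lambda>v. g z (fstpart v) (sndpart v)) (concat Wst Ust))
       \<and> vector_derivative That (at 0) =
           matrix_inv (hess (\<lambda>T. avg_loss X f Wst T) Tst)
             *v (jacobian (\<lambda>W. grad (\<lambda>T. avg_loss X f W T) Tst) (at Wst)
             *v fstpart (matrix_inv (hess (\<lambda>v. avg_loss Z g (fstpart v) (sndpart v)) (concat Wst Ust))
                        *v grad (\<lambda>v. g z (fstpart v) (sndpart v)) (concat Wst Ust)))"
proof -
  define G where "G v = avg_loss Z g (fstpart v) (sndpart v)" for v
  define gz where "gz v = g z (fstpart v) (sndpart v)" for v
  define F where "F v = avg_loss X f (fstpart v) (sndpart v)" for v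
  define W' U' T' where "W' = vector_derivative What (at 0)"
    and "U' = vector_derivative Uhat (at 0)" and "T' = vector_derivative That (at 0)"
  have G: "G differentiable (at v)" "grad G differentiable (at v)" for v
    unfolding G_def using finZ(1) g_C2 by (rule differentiable_avg_loss differentiable_grad_avg_loss)+
  have gz: "gz differentiable (at v)" "grad gz differentiable (at v)" for v
    using g_C2[of z] unfolding C2_def gz_def by blast+
  have F: "F differentiable (at v)" "grad F differentiable (at v)" for v
    unfolding F_def using finX(1) f_C2 by (rule differentiable_avg_loss differentiable_grad_avg_loss)+
  have W': "(What has_vector_derivative W') (at 0)" and U': "(Uhat has_vector_derivative U') (at 0)"
    and T': "(That has_vector_derivative T') (at 0)"
    using diff unfolding W'_def U'_def T'_def vector_derivative_works by blast+
  have W0: "What 0 = Wst" and U0: "Uhat 0 = Ust" and T0: "That 0 = Tst"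
    using pert_WU[of 0] pert_T[of 0] opt_WU opt_T \<delta>_pos by auto
  have "concat (What e) (Uhat e) \<in> argmin_set (\<lambda>v. G v + e * gz v)" if "\<bar>e\<bar> < \<delta>" for e
    using pert_WU[OF that] by (intro concat_mem_argmin_set) (simp add: G_def gz_def)
  from perturbed_argmin_derivative[OF G gz has_vector_derivative_concat[OF W' U'] \<delta>_pos this]
  have "concat W' U' = - (matrix_inv (hess G (concat Wst Ust)) *v grad gz (concat Wst Ust))"
    using invG[folded G_def[abs_def]] by (simp add: W0 U0)
  then have W'_eq: "W' = - fstpart (matrix_inv (hess G (concat Wst Ust)) *v grad gz (concat Wst Ust))"
    by (metis fstpart_concat fstpart_uminus)
  have "T' = - (matrix_inv (hess (\<lambda>T. avg_loss X f Wst T) Tst)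
                 *v (jacobian (\<lambda>W. grad (\<lambda>T. avg_loss X f W T) Tst) (at Wst) *v W'))"
    using partial_argmin_derivative[OF F W' T' \<delta>_pos] pert_T invF
    by (simp add: F_def W0 T0)
  with W'_eq show ?thesis
    unfolding W'_def T'_def G_def[abs_def] gz_def[abs_def] by (simp add: matrix_vector_mult_uminus)
qed

end
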